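(* Let $\delta:\,]0,+\infty[\to\mathbb R$ be nonnegative, bounded and continuously differentiable with $\lim_{r\downarrow0}\sqrt r\,\delta'(r)=0$ (so that $u\mapsto\delta(u^2)$ extends to a continuously differentiable function on $\mathbb R$). Consider the system $$u''+\delta(u^2)u^2u'=\frac{Eu}{2},\qquad E'=-4\delta(u^2)(u')^2,$$ and the invariant manifold $\mathcal M=\{(u,u',E)\in\mathbb R\times\mathbb R\times\mathbb R:\ 2(u')^2-Eu^2=1\}$. Let $(u,E):\,]A,0]\to\mathbb R^2$ (with $-\infty\le A<0$) be a solution of this system lying on $\mathcal M$ and maximal to the left. Then $\int_A^0u(s)^2\,ds=+\infty$.
   Context: Primes denote derivatives with respect to the independent variable $s$. Maximal to the left means the solution admits no extension to an interval $]\hat A,0]$ with $\hat A<A$. *)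

theory Defs
  imports "HOL-Analysis.Analysis"
begin

text \<open>The continuous extension of u \<mapsto> delta(u^2) to all of the reals:
  at u = 0 it takes the value lim_{r -> 0+} delta(r).\<close>
definition dsq :: "(real \<Rightarrow> real) \<Rightarrow> real \<Rightarrow> real" where
  "dsq \<delta> x = (if x = 0 then Lim (at_right 0) \<delta> else \<delta> (x\<^sup>2))"

definition lint :: "ereal \<Rightarrow> real set" where
  "lint A = {s. A < ereal s \<and> s \<le> 0}"

definition ode_sol :: "(real \<Rightarrow> real) \<Rightarrow> ereal \<Rightarrow> (real \<Rightarrow> real) \<Rightarrow> (real \<Rightarrow> real)
    \<Rightarrow> (real \<Rightarrow> real) \<Rightarrow> bool" where
  "ode_sol \<delta> A u u' E \<longleftrightarrow> A < 0 \<and>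
     (\<exists>u''. \<forall>s\<in>lint A.
        (u has_real_derivative u' s) (at s within lint A) \<and>
        (u' has_real_derivative u'' s) (at s within lint A) \<and>
        (E has_real_derivative (-4 * dsq \<delta> (u s) * (u' s)\<^sup>2)) (at s within lint A) \<and>
        u'' s + dsq \<delta> (u s) * (u s)\<^sup>2 * u' s = E s * u s / 2)"

definition maximal_left :: "(real \<Rightarrow> real) \<Rightarrow> ereal \<Rightarrow> (real \<Rightarrow> real) \<Rightarrow> (real \<Rightarrow> real) \<Rightarrow> bool" where
  "maximal_left \<delta> A u E \<longleftrightarrow>
     \<not> (\<exists>B v v' F. B < A \<and> ode_sol \<delta> B v v' F \<and> (\<forall>s\<in>lint A. v s = u s \<and> F s = E s))"

end

theory Submission
  imports Defs
begin

text \<open>If \<open>\<integral> u\<^sup>2\<close> were finite, then \<open>tail s = \<integral>\<^sub>s\<^sup>0 u\<^sup>2\<close> would be bounded. Along the flow \<open>E\<close>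
  is nonincreasing, and if \<open>G' x = \<delta>(x\<^sup>2) x\<^sup>3\<close> then \<open>u u' + G u\<close> has derivative
  \<open>1/2 + E u\<^sup>2 \<ge> 1/2 - \<bar>E 0\<bar> u\<^sup>2\<close>.
  If \<open>A = -\<infinity>\<close>, integrating this and using \<open>G \<ge> 0\<close> gives \<open>u u' \<le> -1\<close> far to the left, so
  \<open>u\<^sup>2\<close> grows linearly there and \<open>tail\<close> is unbounded.
  If \<open>A\<close> is finite, Gronwall estimates driven by the bound on \<open>tail\<close> keep \<open>E\<close> and \<open>u\<close>, hence
  the whole state \<open>(u, u', E)\<close>, bounded on \<open>]A, 0]\<close>. The state is then Lipschitz and has a limit
  at \<open>A\<close>, and a Picard solution of the first-order system issued from this limit continues the
  solution beyond \<open>A\<close>, contradicting maximality.\<close>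

lemma has_real_derivative_nonneg_imp_le:
  fixes F :: "real \<Rightarrow> real"
  assumes "s \<le> t" "{s..t} \<subseteq> S"
    and deriv: "\<And>x. x \<in> S \<Longrightarrow> (F has_real_derivative F' x) (at x within S)"
    and nonneg: "\<And>x. x \<in> S \<Longrightarrow> 0 \<le> F' x"
  shows "F s \<le> F t"
proof (rule DERIV_nonneg_imp_increasing_open[OF \<open>s \<le> t\<close>])
  fix x assume x: "s < x" "x < t"
  with \<open>{s..t} \<subseteq> S\<close> have "x \<in> S" and "at x within S = at x"
    by (auto intro!: at_within_open_subset[of _ "{s<..<t}"])
  then show "\<exists>y. (F has_real_derivative y) (at x) \<and> 0 \<le> y"
    using deriv nonneg by metis
next
  show "continuous_on {s..t} F"
    using DERIV_continuous[OF deriv] \<open>{s..t} \<subseteq> S\<close>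
    by (meson continuous_on_eq_continuous_within continuous_within_subset subsetD)
qed

lemma gronwall_le_exp:
  fixes w K :: "real \<Rightarrow> real"
  assumes "s \<le> t" "{s..t} \<subseteq> S"
    and w_deriv: "\<And>x. x \<in> S \<Longrightarrow> (w has_real_derivative w' x) (at x within S)"
    and K_deriv: "\<And>x. x \<in> S \<Longrightarrow> (K has_real_derivative k x) (at x within S)"
    and pos: "\<And>x. x \<in> S \<Longrightarrow> 0 < w x"
    and growth: "\<And>x. x \<in> S \<Longrightarrow> - k x * w x \<le> w' x"
  shows "w s \<le> w t * exp (K t - K s)"
proof -
  have "ln (w s) + K s \<le> ln (w t) + K t"
  proof (rule has_real_derivative_nonneg_imp_le[OF assms(1,2)])
    fix x assume "x \<in> S"
    then show "((\<lambda>x. ln (w x) + K x) has_real_derivative w' x / w x + k x) (at x within S)"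
      using pos by (auto intro!: derivative_eq_intros w_deriv K_deriv)
    have "0 \<le> (w' x + k x * w x) / w x"
      using growth[OF \<open>x \<in> S\<close>] pos[OF \<open>x \<in> S\<close>] by simp
    then show "0 \<le> w' x / w x + k x"
      using pos[OF \<open>x \<in> S\<close>] by (simp add: field_simps)
  qed
  then have "exp (ln (w s)) \<le> exp (ln (w t) + (K t - K s))"
    by simp
  moreover have "0 < w s" "0 < w t"
    using pos assms(1,2) by auto
  ultimately show ?thesis
    by (simp add: exp_add)
qed

lemma signed_integral_change_base:
  fixes h :: "real \<Rightarrow> real"
  assumes "continuous_on UNIV h" "c \<le> y" "c \<le> 0"
  shows "integral {0..y} h - integral {y..0} h = integral {c..y} h - integral {c..0} h"
proof -
  have int: "h integrable_on {c..x}" for x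
    using assms by (intro integrable_continuous_real) (auto intro: continuous_on_subset)
  show ?thesis
  proof (cases "0 \<le> y")
    case True
    have "integral {c..0} h + integral {0..y} h = integral {c..y} h"
      by (rule Henstock_Kurzweil_Integration.integral_combine[OF assms(3) True int])
    moreover have "integral {y..0} h = 0"
      using True by (cases "y = 0") auto
    ultimately show ?thesis
      by simp
  next
    case False
    have "integral {c..y} h + integral {y..0} h = integral {c..0} h"
      by (rule Henstock_Kurzweil_Integration.integral_combine[OF assms(2) _ int]) (use False in simp)
    moreover have "integral {0..y} h = 0"
      using False by simp
    ultimately show ?thesis
      by simp
  qed
qed

lemma continuous_has_antiderivative:
  fixes h :: "real \<Rightarrow> real"
  assumes "continuous_on UNIV h"
  obtains H where "H 0 = 0" "\<And>x. (H has_real_derivative h x) (at x)"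
proof -
  \<comment> \<open>One of the two integrals is over an empty or degenerate interval, hence \<open>0\<close>.\<close>
  define H where "H x = integral {0..x} h - integral {x..0} h" for x
  have "(H has_real_derivative h x) (at x)" for x
  proof -
    define c :: real where "c = min x 0 - 1"
    have "((\<lambda>y. integral {c..y} h - integral {c..0} h) has_real_derivative h x)
        (at x within {c..x + 1})"
      by (auto intro!: derivative_eq_intros integral_has_real_derivative
          continuous_on_subset[OF assms] simp: c_def)
    then have "(H has_real_derivative h x) (at x within {c..x + 1})"
      by (rule has_field_derivative_transform_within[where d = 1])
        (auto simp: c_def H_def signed_integral_change_base[OF assms] dist_real_def)
    moreover have "at x within {c..x + 1} = at x"
      by (rule at_within_open_subset[of _ "{c<..<x + 1}"]) (auto simp: c_def)
    ultimately show ?thesis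
      by simp
  qed
  moreover have "H 0 = 0"
    by (simp add: H_def)
  ultimately show ?thesis
    using that by blast
qed

lemma antiderivative_nonneg:
  fixes H h :: "real \<Rightarrow> real"
  assumes "H 0 = 0" and deriv: "\<And>x. (H has_real_derivative h x) (at x)"
    and sign: "\<And>x. 0 \<le> x * h x"
  shows "0 \<le> H x"
proof -
  have cont: "continuous_on S H" for S
    using DERIV_isCont[OF deriv] by (simp add: continuous_at_imp_continuous_on)
  show ?thesis
  proof (cases "0 \<le> x")
    case True
    have "H 0 \<le> H x"
    proof (rule DERIV_nonneg_imp_increasing_open[OF True _ cont])
      fix y :: real assume "0 < y"
      then have "0 \<le> h y"
        using sign[of y] by (simp add: zero_le_mult_iff)
      then show "\<exists>d. (H has_real_derivative d) (at y) \<and> 0 \<le> d"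
        using deriv by blast
    qed
    with assms show ?thesis
      by simp
  next
    case False
    have "- H x \<le> - H 0"
    proof (rule DERIV_nonneg_imp_increasing_open[of x 0 "\<lambda>x. - H x"])
      fix y :: real assume "y < 0"
      then have "h y \<le> 0"
        using sign[of y] by (simp add: zero_le_mult_iff)
      then show "\<exists>d. ((\<lambda>x. - H x) has_real_derivative d) (at y) \<and> 0 \<le> d"
        using DERIV_minus[OF deriv] by fastforce
    next
      show "continuous_on {x..0} (\<lambda>x. - H x)"
        by (intro continuous_on_minus cont)
    qed (use False in simp)
    with assms show ?thesis
      by simp
  qed
qed

lemma abs_le_one_plus_square: "\<bar>x::real\<bar> \<le> 1 + x\<^sup>2"
proof (cases "\<bar>x\<bar> \<le> 1")
  case False
  then have "\<bar>x\<bar> * 1 \<le> \<bar>x\<bar> * \<bar>x\<bar>"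
    by (intro mult_left_mono) auto
  then show ?thesis
    by (simp add: power2_eq_square)
qed (use zero_le_power2[of x] in linarith)

lemma integral_le_nn_integral:
  fixes q :: "real \<Rightarrow> real"
  assumes "continuous_on {s..t} q" "{s..t} \<subseteq> S" "\<And>x. x \<in> S \<Longrightarrow> 0 \<le> q x"
  shows "ennreal (integral {s..t} q) \<le> (\<integral>\<^sup>+ x\<in>S. ennreal (q x) \<partial>lborel)"
proof -
  have "(q has_integral integral {s..t} q) {s..t}"
    using assms(1) by (intro integrable_integral integrable_continuous_real)
  then have "ennreal (integral {s..t} q) = (\<integral>\<^sup>+ x\<in>{s..t}. ennreal (q x) \<partial>lborel)"
    using assms(2,3) by (subst nn_integral_has_integral_lebesgue') auto
  also have "\<dots> \<le> (\<integral>\<^sup>+ x\<in>S. ennreal (q x) \<partial>lborel)"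
    using assms(2) by (intro nn_integral_mono) (auto simp: indicator_def)
  finally show ?thesis .
qed

lemma lipschitz_on_Icc_if_deriv_bounded:
  fixes f :: "real \<Rightarrow> real"
  assumes "0 \<le> K" "continuous_on {a..b} f"
    and deriv: "\<And>x. a < x \<Longrightarrow> x < b \<Longrightarrow> (f has_real_derivative f' x) (at x)"
    and bound: "\<And>x. a < x \<Longrightarrow> x < b \<Longrightarrow> \<bar>f' x\<bar> \<le> K"
  shows "K-lipschitz_on {a..b} f"
proof (rule lipschitz_on_leI)
  fix x y assume xy: "x \<in> {a..b}" "y \<in> {a..b}" "x \<le> y"
  show "dist (f x) (f y) \<le> K * dist x y"
  proof (cases "x = y")
    case False
    with xy have "x < y" "{x..y} \<subseteq> {a..b}"
      by auto
    from \<open>x < y\<close> have "norm (f y - f x) \<le> K * y - K * x"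
    proof (rule differentiable_bound_general[where f' = f' and \<phi> = "\<lambda>t. K * t" and \<phi>' = "\<lambda>_. K"])
      show "continuous_on {x..y} f"
        using assms(2) \<open>{x..y} \<subseteq> {a..b}\<close> by (rule continuous_on_subset)
      show "continuous_on {x..y} (\<lambda>t. K * t)"
        by (intro continuous_intros)
      fix z assume "x < z" "z < y"
      with xy have z: "a < z" "z < b"
        by auto
      show "(f has_vector_derivative f' z) (at z)"
        using deriv[OF z] by (simp add: has_real_derivative_iff_has_vector_derivative)
      show "((\<lambda>t. K * t) has_vector_derivative K) (at z)"
        unfolding has_real_derivative_iff_has_vector_derivative[symmetric]
        by (auto intro!: derivative_eq_intros)
      show "norm (f' z) \<le> K"
        using bound[OF z] by simp
    qed
    with xy show ?thesis
      by (simp add: dist_real_def abs_minus_commute algebra_simps)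
  qed simp
qed fact

lemma vector_derivative_bound_imp_lipschitz:
  fixes Y :: "real \<Rightarrow> 'a::real_normed_vector"
  assumes "convex S" "0 \<le> B"
    and "\<And>x. x \<in> S \<Longrightarrow> (Y has_vector_derivative Y' x) (at x within S)"
    and "\<And>x. x \<in> S \<Longrightarrow> norm (Y' x) \<le> B"
  shows "B-lipschitz_on S Y"
  using assms
  by (intro bounded_derivative_imp_lipschitz[where f' = "\<lambda>x h. h *\<^sub>R Y' x"])
    (auto simp: has_vector_derivative_def onorm_scaleR_left onorm_id)

lemma lipschitz_on_mult:
  fixes f g :: "'a::metric_space \<Rightarrow> real"
  assumes "compact U" "L-lipschitz_on U f" "M-lipschitz_on U g"
  obtains K where "K-lipschitz_on U (\<lambda>x. f x * g x)"
proof -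
  obtain Bf Bg where Bf: "\<And>x. x \<in> U \<Longrightarrow> \<bar>f x\<bar> \<le> Bf" and Bg: "\<And>x. x \<in> U \<Longrightarrow> \<bar>g x\<bar> \<le> Bg"
    using compact_imp_bounded[OF compact_continuous_image[OF lipschitz_on_continuous_on assms(1)]]
      assms(2,3) by (metis bounded_iff imageI real_norm_def)
  have bound: "dist (f x * g x) (f y * g y) \<le> (L * \<bar>Bg\<bar> + \<bar>Bf\<bar> * M) * dist x y"
    if "x \<in> U" "y \<in> U" for x y
  proof -
    have "f x * g x - f y * g y = (f x - f y) * g x + f y * (g x - g y)"
      by (simp add: algebra_simps)
    then have "dist (f x * g x) (f y * g y) \<le> dist (f x) (f y) * \<bar>g x\<bar> + \<bar>f y\<bar> * dist (g x) (g y)"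
      by (metis abs_mult abs_triangle_ineq dist_real_def)
    also have "\<dots> \<le> (L * dist x y) * \<bar>Bg\<bar> + \<bar>Bf\<bar> * (M * dist x y)"
    proof (intro add_mono mult_mono)
      show "\<bar>g x\<bar> \<le> \<bar>Bg\<bar>" "\<bar>f y\<bar> \<le> \<bar>Bf\<bar>"
        using that Bf Bg by (meson abs_ge_self order_trans)+
      show "0 \<le> L * dist x y"
        using lipschitz_on_nonneg[OF assms(2)] by simp
    qed (use that lipschitz_onD[OF assms(2)] lipschitz_onD[OF assms(3)] in auto)
    finally show ?thesis
      by (simp add: algebra_simps)
  qed
  have "0 \<le> L * \<bar>Bg\<bar> + \<bar>Bf\<bar> * M"
    using lipschitz_on_nonneg[OF assms(2)] lipschitz_on_nonneg[OF assms(3)] by simp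
  with bound show ?thesis
    by (intro that lipschitz_onI)
qed

section \<open>Solutions of autonomous equations\<close>

text \<open>Extended by constants outside \<open>[a - h, a]\<close>, the integral operator of the backward initial
  value problem acts on the complete space of bounded continuous functions on the line.\<close>
definition picard_op :: "('a::banach \<Rightarrow> 'a) \<Rightarrow> 'a \<Rightarrow> real \<Rightarrow> real \<Rightarrow> (real \<Rightarrow> 'a) \<Rightarrow> real \<Rightarrow> 'a" where
  "picard_op f x0 a h X = ext_cont (\<lambda>t. x0 - integral {t..a} (\<lambda>s. f (X s))) (a - h) a"

lemma clamp_in_Icc: "0 \<le> h \<Longrightarrow> clamp (a - h) a t \<in> {a - h..(a::real)}"
  using clamp_in_interval[of "a - h" a t] by simp

lemma picard_op_eq: "t \<in> {a - h..a} \<Longrightarrow> picard_op f x0 a h X t = x0 - integral {t..a} (\<lambda>s. f (X s))"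
  using clamp_cancel_cbox[of t "a - h" a] by (simp add: picard_op_def ext_cont_def cbox_interval)

lemma picard_op_bcontfun:
  fixes f :: "'a::banach \<Rightarrow> 'a" and X :: "real \<Rightarrow>\<^sub>C 'a"
  assumes "continuous_on UNIV f" and bound: "\<And>x. norm (f x) \<le> B" and "0 < h"
  shows "picard_op f x0 a h X \<in> bcontfun"
proof (rule bcontfun_normI)
  have fX_cont: "continuous_on S (\<lambda>s. f (X s))" for S
    using assms(1) by (auto intro: continuous_on_compose2[of UNIV f])
  then show "continuous_on UNIV (picard_op f x0 a h X)"
    unfolding picard_op_def
    by (intro continuous_on_ext_cont)
      (simp add: cbox_interval; intro continuous_intros indefinite_integral_continuous_1'
        integrable_continuous_real)
  fix t
  let ?c = "clamp (a - h) a t"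
  have "norm (integral {?c..a} (\<lambda>s. f (X s))) \<le> B * (a - ?c)"
    using clamp_in_Icc[of h a t] \<open>0 < h\<close> bound by (intro integral_bound fX_cont) auto
  also have "\<dots> \<le> \<bar>B\<bar> * h"
    using clamp_in_Icc[of h a t] \<open>0 < h\<close> by (intro mult_mono) auto
  finally show "norm (picard_op f x0 a h X t) \<le> norm x0 + \<bar>B\<bar> * h"
    unfolding picard_op_def ext_cont_def by (metis add_left_mono norm_triangle_ineq4 order_trans)
qed

lemma picard_op_contraction:
  fixes f :: "'a::banach \<Rightarrow> 'a" and X Y :: "real \<Rightarrow>\<^sub>C 'a"
  assumes lip: "L-lipschitz_on UNIV f" and "0 < h"
  shows "dist (picard_op f x0 a h X t) (picard_op f x0 a h Y t) \<le> (L * h) * dist X Y"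
proof -
  let ?c = "clamp (a - h) a t"
  have fX_cont: "continuous_on S (\<lambda>s. f (Z s))" for S and Z :: "real \<Rightarrow>\<^sub>C 'a"
    using lipschitz_on_continuous_on[OF lip] by (auto intro: continuous_on_compose2[of UNIV f])
  have "dist (picard_op f x0 a h X t) (picard_op f x0 a h Y t)
      = norm (integral {?c..a} (\<lambda>s. f (X s) - f (Y s)))"
    unfolding picard_op_def ext_cont_def dist_norm
    by (subst integral_diff) (auto intro: integrable_continuous_real fX_cont simp: norm_minus_commute)
  also have "\<dots> \<le> (L * dist X Y) * (a - ?c)"
  proof (rule integral_bound)
    fix s
    have "norm (f (X s) - f (Y s)) \<le> L * dist (X s) (Y s)"
      using lipschitz_onD[OF lip] by (simp add: dist_norm)
    also have "\<dots> \<le> L * dist X Y"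
      by (intro mult_left_mono dist_bounded lipschitz_on_nonneg[OF lip])
    finally show "norm (f (X s) - f (Y s)) \<le> L * dist X Y" .
  qed (use clamp_in_Icc[of h a t] \<open>0 < h\<close> in \<open>auto intro!: continuous_on_diff fX_cont\<close>)
  also have "\<dots> \<le> (L * dist X Y) * h"
    using clamp_in_Icc[of h a t] \<open>0 < h\<close> lipschitz_on_nonneg[OF lip] by (intro mult_left_mono) auto
  finally show ?thesis
    by (simp add: algebra_simps)
qed

lemma backward_integral_equation_solvable:
  fixes f :: "'a::banach \<Rightarrow> 'a" and a h :: real
  assumes lip: "L-lipschitz_on UNIV f" and bound: "\<And>x. norm (f x) \<le> B"
    and "0 < h" "L * h < 1"
  obtains X where "continuous_on UNIV X"
    "\<And>t. t \<in> {a - h..a} \<Longrightarrow> X t = x0 - integral {t..a} (\<lambda>s. f (X s))"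
proof -
  define P where "P X = Bcontfun (picard_op f x0 a h (apply_bcontfun X))" for X
  have P_apply: "apply_bcontfun (P X) = picard_op f x0 a h (apply_bcontfun X)" for X
    using picard_op_bcontfun[OF lipschitz_on_continuous_on[OF lip] bound \<open>0 < h\<close>]
    by (simp add: P_def Bcontfun_inverse)
  have "dist (P X) (P Y) \<le> (L * h) * dist X Y" for X Y
    by (rule dist_bound) (unfold P_apply, rule picard_op_contraction[OF lip \<open>0 < h\<close>])
  then obtain X where "P X = X"
    using banach_fix_type[of "L * h" P] lipschitz_on_nonneg[OF lip] \<open>0 < h\<close> \<open>L * h < 1\<close>
    by auto
  then have fixed: "picard_op f x0 a h (apply_bcontfun X) t = X t" for t
    by (metis P_apply)
  show ?thesis
  proof (rule that[of "apply_bcontfun X"])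
    fix t assume "t \<in> {a - h..a}"
    then show "X t = x0 - integral {t..a} (\<lambda>s. f (X s))"
      using fixed[of t] by (simp add: picard_op_eq)
  qed simp
qed

lemma picard_backward:
  fixes f :: "'a::banach \<Rightarrow> 'a" and a h :: real
  assumes lip: "L-lipschitz_on UNIV f" and bound: "\<And>x. norm (f x) \<le> B"
    and "0 < h" "L * h < 1"
  obtains X where "X a = x0"
    "\<And>t. t \<in> {a - h..a} \<Longrightarrow> (X has_vector_derivative f (X t)) (at t within {a - h..a})"
    "\<And>t. t \<in> {a - h..a} \<Longrightarrow> norm (X t - x0) \<le> B * (a - t)"
proof -
  obtain X where X_cont: "continuous_on UNIV X"
    and X_eq: "\<And>t. t \<in> {a - h..a} \<Longrightarrow> X t = x0 - integral {t..a} (\<lambda>s. f (X s))"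
    using backward_integral_equation_solvable[OF assms] by blast
  have fX_cont: "continuous_on S (\<lambda>s. f (X s))" for S
    using continuous_on_compose2[OF lipschitz_on_continuous_on[OF lip] X_cont]
    by (auto intro: continuous_on_subset)
  show ?thesis
  proof
    show "X a = x0"
      using X_eq[of a] \<open>0 < h\<close> by simp
    fix t assume t: "t \<in> {a - h..a}"
    have "((\<lambda>t. x0 - integral {t..a} (\<lambda>s. f (X s))) has_vector_derivative f (X t))
        (at t within {a - h..a})"
      using has_vector_derivative_diff[OF has_vector_derivative_const
          integral_has_vector_derivative'[OF fX_cont t]] by simp
    with t X_eq show "(X has_vector_derivative f (X t)) (at t within {a - h..a})"
      by (rule has_vector_derivative_transform)
    have "norm (integral {t..a} (\<lambda>s. f (X s))) \<le> B * (a - t)"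
      using t bound by (intro integral_bound fX_cont) auto
    then show "norm (X t - x0) \<le> B * (a - t)"
      using X_eq[OF t] by simp
  qed
qed

lemma lipschitz_extension_from_cball:
  fixes f :: "'a::euclidean_space \<Rightarrow> 'b::real_normed_vector"
  assumes "0 < r" and lip: "L-lipschitz_on (cball x0 r) f"
  obtains g where "L-lipschitz_on UNIV g" "\<And>x. norm (g x) \<le> norm (f x0) + L * r"
    "\<And>x. x \<in> cball x0 r \<Longrightarrow> g x = f x"
proof
  define p where "p = closest_point (cball x0 r)"
  have p_in: "p x \<in> cball x0 r" for x
    unfolding p_def using \<open>0 < r\<close> by (intro closest_point_in_set) auto
  have p_lip: "1-lipschitz_on UNIV p"
    unfolding p_def by (rule lipschitz_onI) (use \<open>0 < r\<close> in \<open>auto intro!: closest_point_lipschitz\<close>)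
  show "L-lipschitz_on UNIV (\<lambda>x. f (p x))"
    using lipschitz_on_compose2[OF p_lip lipschitz_on_subset[OF lip]] p_in
    by (simp add: image_subset_iff)
  fix x
  have "norm (f (p x)) \<le> norm (f x0) + dist (f (p x)) (f x0)"
    by (metis dist_norm norm_triangle_sub)
  also have "dist (f (p x)) (f x0) \<le> L * dist (p x) x0"
    using lipschitz_onD[OF lip p_in] \<open>0 < r\<close> by simp
  also have "\<dots> \<le> L * r"
    using p_in[of x] lipschitz_on_nonneg[OF lip] by (intro mult_left_mono) (auto simp: dist_commute)
  finally show "norm (f (p x)) \<le> norm (f x0) + L * r"
    by simp
  show "x \<in> cball x0 r \<Longrightarrow> f (p x) = f x"
    by (simp add: p_def closest_point_self)
qed

text \<open>Picard iteration for a Lipschitz extension of \<open>f\<close> to the whole space; for short times the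
  solution stays in the ball, where the extension agrees with \<open>f\<close>.\<close>
lemma picard_backward_local:
  fixes f :: "'a::euclidean_space \<Rightarrow> 'a" and a :: real
  assumes "0 < r" and lip: "L-lipschitz_on (cball x0 r) f"
  obtains h X where "0 < h" "X a = x0"
    "\<And>t. t \<in> {a - h..a} \<Longrightarrow> (X has_vector_derivative f (X t)) (at t within {a - h..a})"
proof -
  define B where "B = norm (f x0) + L * r"
  obtain g where g_lip: "L-lipschitz_on UNIV g" and g_bound: "\<And>x. norm (g x) \<le> B"
    and g_eq: "\<And>x. x \<in> cball x0 r \<Longrightarrow> g x = f x"
    using lipschitz_extension_from_cball[OF assms] unfolding B_def by blast
  have "0 \<le> L" "0 \<le> B"
    using lipschitz_on_nonneg[OF lip] \<open>0 < r\<close> by (auto simp: B_def)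
  define h where "h = min (r / (B + 1)) (1 / (L + 1))"
  have "0 < h" "L * h < 1" "B * h \<le> r"
    using \<open>0 < r\<close> \<open>0 \<le> L\<close> \<open>0 \<le> B\<close> by (auto simp: h_def field_simps min_def)
  obtain X where X: "X a = x0"
    "\<And>t. t \<in> {a - h..a} \<Longrightarrow> (X has_vector_derivative g (X t)) (at t within {a - h..a})"
    "\<And>t. t \<in> {a - h..a} \<Longrightarrow> norm (X t - x0) \<le> B * (a - t)"
    using picard_backward[OF g_lip g_bound \<open>0 < h\<close> \<open>L * h < 1\<close>] by metis
  have "g (X t) = f (X t)" if "t \<in> {a - h..a}" for t
  proof (rule g_eq)
    have "B * (a - t) \<le> B * h"
      using that \<open>0 \<le> B\<close> by (intro mult_left_mono) auto
    with X(3)[OF that] \<open>B * h \<le> r\<close> show "X t \<in> cball x0 r"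
      by (simp add: dist_norm norm_minus_commute)
  qed
  with X \<open>0 < h\<close> show ?thesis
    by (intro that[of h X]) auto
qed

lemma continuous_on_fun_upd_left_endpoint:
  fixes Y :: "real \<Rightarrow> 'a::topological_space"
  assumes "a < b" "continuous_on {a<..b} Y" "(Y \<longlongrightarrow> y) (at_right a)"
  shows "continuous_on {a..b} (Y(a := y))"
  unfolding continuous_on_eq_continuous_within
proof
  fix t assume t: "t \<in> {a..b}"
  show "continuous (at t within {a..b}) (Y(a := y))"
  proof (cases "t = a")
    case True
    have "(Y(a := y) \<longlongrightarrow> y) (at_right a)"
      using assms(3) by (rule Lim_transform_eventually) (auto simp: eventually_at_filter)
    with True \<open>a < b\<close> show ?thesis
      by (simp add: continuous_within at_within_Icc_at_right)
  next
    case False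
    with t have "at t within {a..b} = at t within {a<..b}"
      by (intro at_within_nhd[of t "{a<..}"]) auto
    moreover have "(Y \<longlongrightarrow> Y t) (at t within {a<..b})"
      using assms(2) t False by (auto simp: continuous_on_def)
    then have "(Y(a := y) \<longlongrightarrow> Y t) (at t within {a<..b})"
      by (rule Lim_transform_eventually) (auto simp: eventually_at_filter)
    ultimately show ?thesis
      using False by (simp add: continuous_within)
  qed
qed

lemma has_vector_derivative_extend_left_endpoint:
  fixes Y :: "real \<Rightarrow> 'a::banach" and f :: "'a \<Rightarrow> 'a"
  assumes "a < b" and f_cont: "continuous_on UNIV f"
    and deriv: "\<And>t. t \<in> {a<..b} \<Longrightarrow> (Y has_vector_derivative f (Y t)) (at t within {a<..b})"
    and lim: "(Y \<longlongrightarrow> y) (at_right a)"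
    and t: "t \<in> {a..b}"
  shows "(Y(a := y) has_vector_derivative f ((Y(a := y)) t)) (at t within {a..b})"
proof -
  define Z where "Z = Y(a := y)"
  have Z_deriv: "(Z has_vector_derivative f (Z t)) (at t within {a..b})" if "t \<in> {a<..b}" for t
  proof -
    have "(Z has_vector_derivative f (Y t)) (at t within {a<..b})"
      by (rule has_vector_derivative_transform[OF that _ deriv[OF that]]) (auto simp: Z_def)
    moreover have "at t within {a..b} = at t within {a<..b}"
      using that by (intro at_within_nhd[of t "{a<..}"]) auto
    ultimately show ?thesis
      using that by (simp add: Z_def)
  qed
  have "continuous_on {a<..b} Y"
    using has_vector_derivative_continuous[OF deriv] by (simp add: continuous_on_eq_continuous_within)
  then have Z_cont: "continuous_on {a..b} Z"
    unfolding Z_def using continuous_on_fun_upd_left_endpoint[OF \<open>a < b\<close> _ lim] by blast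
  define I where "I t = y + integral {a..t} (\<lambda>s. f (Z s))" for t
  have fZ_cont: "continuous_on {a..b} (\<lambda>s. f (Z s))"
    using continuous_on_compose2[OF f_cont Z_cont] by simp
  have I_deriv: "(I has_vector_derivative f (Z t)) (at t within {a..b})" if "t \<in> {a..b}" for t
    using has_vector_derivative_add[OF has_vector_derivative_const
        integral_has_vector_derivative[OF fZ_cont that]]
    by (simp add: I_def[abs_def])
  have "Z t - I t = 0" if "t \<in> {a..b}" for t
  proof (rule has_derivative_zero_unique_strong_interval[of "{a}"])
    have "continuous_on {a..b} I"
      using has_vector_derivative_continuous[OF I_deriv]
      by (simp add: continuous_on_eq_continuous_within)
    with Z_cont show "continuous_on {a..b} (\<lambda>t. Z t - I t)"
      by (intro continuous_intros)
    fix s assume "s \<in> {a..b} - {a}"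
    then have "((\<lambda>t. Z t - I t) has_vector_derivative f (Z s) - f (Z s)) (at s within {a..b})"
      using Z_deriv I_deriv by (intro has_vector_derivative_diff) auto
    then show "((\<lambda>t. Z t - I t) has_derivative (\<lambda>h. 0)) (at s within {a..b})"
      by (simp add: has_vector_derivative_def)
  qed (use that in \<open>auto simp: Z_def I_def\<close>)
  then show ?thesis
    using has_vector_derivative_transform[OF t _ I_deriv[OF t]] by (simp add: Z_def)
qed

lemma has_vector_derivative_join:
  fixes X Y :: "real \<Rightarrow> 'a::real_normed_vector"
  assumes "c < a" "a < b"
    and X: "\<And>t. t \<in> {c..a} \<Longrightarrow> (X has_vector_derivative X' t) (at t within {c..a})"
    and Y: "\<And>t. t \<in> {a..b} \<Longrightarrow> (Y has_vector_derivative Y' t) (at t within {a..b})"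
    and "X a = Y a" "X' a = Y' a"
    and t: "t \<in> {c..b}"
  shows "((\<lambda>t. if t \<le> a then X t else Y t) has_vector_derivative (if t \<le> a then X' t else Y' t))
    (at t within {c..b})"
proof -
  have closures: "closure {c..a} \<inter> closure {a<..b} = {a}"
    using assms(1,2) by auto
  have "((\<lambda>t. if t \<in> {c..a} then X t else Y t) has_vector_derivative
      (if t \<in> {c..a} then X' t else Y' t)) (at t within {c..b})"
  proof (rule has_vector_derivative_If_within_closures[where T = "{a<..b}"])
    show "{c..b} = {c..a} \<union> {a<..b}"
      using assms(1,2) by auto
    show "(X has_vector_derivative X' t) (at t within {c..a} \<union> (closure {c..a} \<inter> closure {a<..b}))"
      if "t \<in> {c..a} \<union> (closure {c..a} \<inter> closure {a<..b})"
      using X that assms(1) unfolding closures by (auto simp: insert_absorb)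
    show "(Y has_vector_derivative Y' t) (at t within {a<..b} \<union> (closure {c..a} \<inter> closure {a<..b}))"
      if "t \<in> {a<..b} \<union> (closure {c..a} \<inter> closure {a<..b})"
    proof -
      have eq: "{a<..b} \<union> (closure {c..a} \<inter> closure {a<..b}) = {a..b}"
        unfolding closures using assms(2) by auto
      show ?thesis
        using Y that unfolding eq by blast
    qed
  qed (use t closures assms in auto)
  moreover have "(if t \<in> {c..a} then X' t else Y' t) = (if t \<le> a then X' t else Y' t)"
    using t by auto
  ultimately have "((\<lambda>t. if t \<in> {c..a} then X t else Y t) has_vector_derivative
      (if t \<le> a then X' t else Y' t)) (at t within {c..b})"
    by simp
  then show ?thesis
    by (rule has_vector_derivative_transform[OF t, rotated]) auto
qed

lemma components_has_real_derivative:
  fixes Z :: "real \<Rightarrow> real \<times> real \<times> real"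
  assumes "(Z has_vector_derivative (a, b, c)) F"
  shows "((\<lambda>t. fst (Z t)) has_real_derivative a) F"
    and "((\<lambda>t. fst (snd (Z t))) has_real_derivative b) F"
    and "((\<lambda>t. snd (snd (Z t))) has_real_derivative c) F"
  using has_derivative_fst[OF assms[unfolded has_vector_derivative_def]]
    has_derivative_fst[OF has_derivative_snd[OF assms[unfolded has_vector_derivative_def]]]
    has_derivative_snd[OF has_derivative_snd[OF assms[unfolded has_vector_derivative_def]]]
  by (simp_all add: has_real_derivative_iff_has_vector_derivative has_vector_derivative_def)

lemma triple_has_vector_derivative:
  assumes "(f has_real_derivative a) (at x within S)" "(g has_real_derivative b) (at x within S)"
    "(h has_real_derivative c) (at x within S)"
  shows "((\<lambda>t. (f t, g t, h t)) has_vector_derivative (a, b, c)) (at x within S)"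
proof -
  have "((\<lambda>t. (f t, g t, h t)) has_derivative (\<lambda>t. (t * a, t * b, t * c))) (at x within S)"
    using assms unfolding has_field_derivative_def
    by (intro has_derivative_Pair) (simp_all add: mult_commute_abs)
  then show ?thesis
    by (simp add: has_vector_derivative_def)
qed

section \<open>The damping coefficient\<close>

locale damping =
  fixes \<delta> \<delta>' :: "real \<Rightarrow> real"
  assumes nonneg: "\<forall>r>0. \<delta> r \<ge> 0"
    and bdd: "bounded (\<delta> ` {0<..})"
    and deriv: "\<forall>r>0. (\<delta> has_real_derivative \<delta>' r) (at r)"
    and cont: "continuous_on {0<..} \<delta>'"
    and lim0: "((\<lambda>r. sqrt r * \<delta>' r) \<longlongrightarrow> 0) (at_right 0)"
begin

lemma eventually_sqrt_deriv_small: "\<exists>r0>0. \<forall>r. 0 < r \<longrightarrow> r < r0 \<longrightarrow> \<bar>sqrt r * \<delta>' r\<bar> < 1"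
proof -
  have "\<forall>\<^sub>F r in at_right 0. \<bar>sqrt r * \<delta>' r\<bar> < 1"
    using lim0 by (auto dest: order_tendstoD simp: tendsto_iff dist_real_def)
  then show ?thesis
    by (auto simp: eventually_at_right_field)
qed

text \<open>Near 0, the derivative of \<open>\<delta> r + 2 sqrt r\<close> is \<open>\<delta>' r + 1 / sqrt r \<ge> 0\<close>, so this
  function is monotone and bounded below; hence \<open>\<delta>\<close> has a limit at \<open>0\<close>.\<close>
lemma convergent_at_right_0: "\<exists>L. (\<delta> \<longlongrightarrow> L) (at_right 0)"
proof -
  obtain r0 where "0 < r0" and small: "\<And>r. 0 < r \<Longrightarrow> r < r0 \<Longrightarrow> \<bar>sqrt r * \<delta>' r\<bar> < 1"
    using eventually_sqrt_deriv_small by blast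
  define k where "k r = \<delta> r + 2 * sqrt r" for r
  have k_mono: "k x \<le> k y" if "0 < x" "x \<le> y" "y < r0" for x y
  proof (rule has_real_derivative_nonneg_imp_le[OF \<open>x \<le> y\<close> _ _ _, where S = "{0<..<r0}"])
    fix z :: real assume z: "z \<in> {0<..<r0}"
    then have "(\<delta> has_real_derivative \<delta>' z) (at z)"
      using deriv by simp
    then have \<delta>_deriv: "(\<delta> has_real_derivative \<delta>' z) (at z within {0<..<r0})"
      by (rule has_field_derivative_at_within)
    show "(k has_real_derivative \<delta>' z + inverse (sqrt z)) (at z within {0<..<r0})"
      unfolding k_def using z
      by (auto intro!: derivative_eq_intros \<delta>_deriv simp: field_simps)
    have "- 1 < sqrt z * \<delta>' z"
      using small[of z] z by auto
    then show "0 \<le> \<delta>' z + inverse (sqrt z)"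
      using z by (simp add: field_simps)
  qed (use that in auto)
  have "(k \<longlongrightarrow> Inf (k ` ({0<..} \<inter> {0<..<r0}))) (at 0 within ({0<..} \<inter> {0<..<r0}))"
    by (rule Lim_right_bound[where K = 0]) (use k_mono nonneg in \<open>auto simp: k_def\<close>)
  moreover have "at 0 within ({0<..} \<inter> {0<..<r0}) = at_right (0::real)"
    by (rule at_within_nhd[where S = "{..<r0}"]) (use \<open>0 < r0\<close> in auto)
  ultimately have "((\<lambda>r. k r - 2 * sqrt r) \<longlongrightarrow> Inf (k ` ({0<..} \<inter> {0<..<r0})) - 2 * sqrt 0)
      (at_right 0)"
    by (intro tendsto_intros) auto
  then show ?thesis
    by (auto simp: k_def)
qed

lemma tendsto_dsq_0: "(\<delta> \<longlongrightarrow> dsq \<delta> 0) (at_right 0)"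
proof -
  obtain L where L: "(\<delta> \<longlongrightarrow> L) (at_right 0)"
    using convergent_at_right_0 by blast
  then have "Lim (at_right 0) \<delta> = L"
    by (intro tendsto_Lim) auto
  with L show ?thesis
    by (simp add: dsq_def)
qed

lemma dsq_nonneg: "0 \<le> dsq \<delta> x"
proof (cases "x = 0")
  case True
  have "\<forall>\<^sub>F r in at_right 0. 0 \<le> \<delta> r"
    using nonneg by (auto simp: eventually_at_right_less eventually_at_filter)
  with True show ?thesis
    using tendsto_lowerbound[OF tendsto_dsq_0] by simp
qed (simp add: dsq_def nonneg)

lemma dsq_bounded: obtains M where "\<And>x. dsq \<delta> x \<le> M"
proof -
  obtain M where "\<forall>r\<in>{0<..}. \<bar>\<delta> r\<bar> \<le> M"
    using bdd by (auto simp: bounded_iff)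
  then have M: "\<And>r. 0 < r \<Longrightarrow> \<delta> r \<le> M"
    by (auto simp: abs_le_iff)
  have "\<forall>\<^sub>F r in at_right 0. \<delta> r \<le> M"
    using M by (auto simp: eventually_at_filter)
  then have "dsq \<delta> 0 \<le> M"
    using tendsto_upperbound[OF tendsto_dsq_0] by simp
  then have "dsq \<delta> x \<le> M" for x
    using M by (cases "x = 0") (auto simp: dsq_def)
  then show ?thesis
    using that by blast
qed

lemma dsq_minus [simp]: "dsq \<delta> (- x) = dsq \<delta> x"
  by (simp add: dsq_def)

lemma dsq_has_derivative:
  assumes "x \<noteq> 0"
  shows "(dsq \<delta> has_real_derivative \<delta>' (x\<^sup>2) * (2 * x)) (at x)"
proof -
  have "((\<lambda>y. \<delta> (y\<^sup>2)) has_real_derivative \<delta>' (x\<^sup>2) * (2 * x)) (at x)"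
    using assms deriv by (auto intro!: DERIV_chain2[of \<delta>] derivative_eq_intros)
  then show ?thesis
    by (rule has_field_derivative_transform_within_open[where S = "- {0}"])
      (use assms in \<open>auto simp: dsq_def\<close>)
qed

lemma isCont_dsq: "isCont (dsq \<delta>) x"
proof (cases "x = 0")
  case True
  have "filterlim (\<lambda>y::real. y\<^sup>2) (at_right 0) (at 0)"
    by (rule tendsto_imp_filterlim_at_right)
      (auto intro!: tendsto_eq_intros simp: eventually_at_filter)
  then have "((\<lambda>y. \<delta> (y\<^sup>2)) \<longlongrightarrow> dsq \<delta> 0) (at 0)"
    using tendsto_dsq_0 filterlim_compose by blast
  then have "(dsq \<delta> \<longlongrightarrow> dsq \<delta> 0) (at 0)"
    by (rule Lim_transform_eventually) (auto simp: eventually_at_filter dsq_def)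
  with True show ?thesis
    by (simp add: isCont_def)
qed (use dsq_has_derivative DERIV_isCont in blast)

lemma continuous_on_dsq: "continuous_on S (dsq \<delta>)"
  by (simp add: continuous_at_imp_continuous_on isCont_dsq)

lemma sqrt_deriv_bounded: obtains C where "\<And>r. 0 < r \<Longrightarrow> r \<le> b \<Longrightarrow> \<bar>sqrt r * \<delta>' r\<bar> \<le> C"
proof -
  obtain r0 where "0 < r0" and small: "\<And>r. 0 < r \<Longrightarrow> r < r0 \<Longrightarrow> \<bar>sqrt r * \<delta>' r\<bar> < 1"
    using eventually_sqrt_deriv_small by blast
  have "compact ((\<lambda>r. sqrt r * \<delta>' r) ` {r0..b})"
    using \<open>0 < r0\<close>
    by (intro compact_continuous_image continuous_intros continuous_on_subset[OF cont]) auto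
  then have "bounded ((\<lambda>r. sqrt r * \<delta>' r) ` {r0..b})"
    by (rule compact_imp_bounded)
  then obtain C where "\<forall>y\<in>(\<lambda>r. sqrt r * \<delta>' r) ` {r0..b}. norm y \<le> C"
    unfolding bounded_iff by blast
  then have C: "\<And>r. r \<in> {r0..b} \<Longrightarrow> \<bar>sqrt r * \<delta>' r\<bar> \<le> C"
    by auto
  show ?thesis
  proof (rule that[of "max 1 C"])
    fix r :: real assume "0 < r" "r \<le> b"
    then show "\<bar>sqrt r * \<delta>' r\<bar> \<le> max 1 C"
      using small[of r] C[of r] by (cases "r < r0") auto
  qed
qed

lemma dsq_lipschitz: obtains K where "K-lipschitz_on {-R..R} (dsq \<delta>)"
proof -
  obtain C where C: "\<And>r. 0 < r \<Longrightarrow> r \<le> R\<^sup>2 \<Longrightarrow> \<bar>sqrt r * \<delta>' r\<bar> \<le> C"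
    using sqrt_deriv_bounded by blast
  define K where "K = 2 * max 0 C"
  have right: "K-lipschitz_on {0..R} (dsq \<delta>)"
  proof (rule lipschitz_on_Icc_if_deriv_bounded[OF _ continuous_on_dsq dsq_has_derivative])
    fix x :: real assume x: "0 < x" "x < R"
    then have "\<bar>sqrt (x\<^sup>2) * \<delta>' (x\<^sup>2)\<bar> \<le> C"
      by (intro C) (auto intro: power_strict_mono[THEN less_imp_le])
    with x show "\<bar>\<delta>' (x\<^sup>2) * (2 * x)\<bar> \<le> K"
      by (simp add: K_def abs_mult mult.commute)
  qed (auto simp: K_def)
  have "(K * 1)-lipschitz_on {-R..0} (\<lambda>x. dsq \<delta> (- x))"
    by (rule lipschitz_on_compose2[OF _ lipschitz_on_subset[OF right]])
      (auto intro: lipschitz_onI simp: dist_real_def)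
  then have left: "K-lipschitz_on {-R..0} (dsq \<delta>)"
    by simp
  show ?thesis
    using lipschitz_on_concat[OF left right] that by simp
qed

lemma damping_potential:
  obtains G where "\<And>x. 0 \<le> G x" "\<And>x. (G has_real_derivative dsq \<delta> x * x ^ 3) (at x)"
proof -
  have "continuous_on UNIV (\<lambda>x. dsq \<delta> x * x ^ 3)"
    by (intro continuous_intros continuous_on_dsq)
  then obtain G where "G 0 = 0" and G: "\<And>x. (G has_real_derivative dsq \<delta> x * x ^ 3) (at x)"
    using continuous_has_antiderivative by blast
  have "0 \<le> G x" for x
  proof (rule antiderivative_nonneg[OF \<open>G 0 = 0\<close> G])
    fix x :: real
    have "x * (dsq \<delta> x * x ^ 3) = dsq \<delta> x * (x\<^sup>2)\<^sup>2"
      by (simp add: power2_eq_square power3_eq_cube)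
    then show "0 \<le> x * (dsq \<delta> x * x ^ 3)"
      using dsq_nonneg[of x] by (metis zero_le_mult_iff zero_le_power2)
  qed
  with G that show ?thesis
    by blast
qed

end

lemma atLeastAtMost_subset_lint: "s \<in> lint A \<Longrightarrow> t \<le> 0 \<Longrightarrow> {s..t} \<subseteq> lint A"
  by (auto simp: lint_def) (meson ereal_less_eq(3) less_le_trans)

lemma lint_MInf [simp]: "lint (- \<infinity>) = {..0}"
  by (auto simp: lint_def)

lemma lint_ereal [simp]: "lint (ereal a) = {a<..0}"
  by (auto simp: lint_def)

lemma lipschitz_on_components:
  fixes U :: "(real \<times> real \<times> real) set"
  shows "1-lipschitz_on U fst" "1-lipschitz_on U (\<lambda>y. fst (snd y))" "1-lipschitz_on U (\<lambda>y. snd (snd y))"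
  by (intro lipschitz_onI; simp add: dist_fst_le order_trans[OF dist_fst_le dist_snd_le]
      order_trans[OF dist_snd_le dist_snd_le])+

text \<open>The right-hand side of the system as a first-order system for the state \<open>(u, u', E)\<close>,
  with \<open>g\<close> in place of \<open>u \<mapsto> \<delta>(u\<^sup>2)\<close>.\<close>
definition damped_field :: "(real \<Rightarrow> real) \<Rightarrow> real \<times> real \<times> real \<Rightarrow> real \<times> real \<times> real" where
  "damped_field g = (\<lambda>(x, p, e). (p, e * x / 2 - g x * x\<^sup>2 * p, -4 * g x * p\<^sup>2))"

lemma damped_field_simp [simp]:
  "damped_field g (x, p, e) = (p, e * x / 2 - g x * x\<^sup>2 * p, -4 * g x * p\<^sup>2)"
  by (simp add: damped_field_def)

lemma damped_field_eq:
  "damped_field g = (\<lambda>y. (fst (snd y),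
    snd (snd y) * fst y / 2 - g (fst y) * (fst y)\<^sup>2 * fst (snd y), -4 * g (fst y) * (fst (snd y))\<^sup>2))"
  by (auto simp: damped_field_def)

lemma continuous_on_damped_field:
  assumes "continuous_on UNIV g"
  shows "continuous_on S (damped_field g)"
proof -
  have "continuous_on S (\<lambda>y::real \<times> real \<times> real. g (fst y))"
    using assms by (intro continuous_on_compose2[OF assms]) (auto intro: continuous_intros)
  then show ?thesis
    unfolding damped_field_eq by (intro continuous_intros) auto
qed

lemma lipschitz_damped_field:
  assumes "compact U" and g_lip: "\<And>R. \<exists>K. K-lipschitz_on {-R..R} g"
  obtains L where "L-lipschitz_on U (damped_field g)"
proof -
  let ?lip = "\<lambda>f :: real \<times> real \<times> real \<Rightarrow> real. \<exists>L. L-lipschitz_on U f"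
  have const: "?lip (\<lambda>y. c)" for c
    using lipschitz_on_constant by blast
  have diff: "?lip f \<Longrightarrow> ?lip h \<Longrightarrow> ?lip (\<lambda>y. f y - h y)" for f h
    by (blast intro: lipschitz_on_diff)
  have mult: "?lip f \<Longrightarrow> ?lip h \<Longrightarrow> ?lip (\<lambda>y. f y * h y)" for f h
    by (metis lipschitz_on_mult[OF \<open>compact U\<close>])
  have divide: "?lip f \<Longrightarrow> ?lip (\<lambda>y. f y / c)" for f c
    using mult[OF _ const, of f "inverse c"] by (simp add: divide_inverse)
  have square: "?lip f \<Longrightarrow> ?lip (\<lambda>y. (f y)\<^sup>2)" for f
    using mult[of f f] by (simp add: power2_eq_square)
  have x: "?lip fst" and p: "?lip (\<lambda>y. fst (snd y))" and e: "?lip (\<lambda>y. snd (snd y))"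
    using lipschitz_on_components by blast+
  have "bounded (fst ` U)"
    using \<open>compact U\<close> by (intro compact_imp_bounded compact_continuous_image continuous_intros)
  then obtain R where "\<forall>x\<in>fst ` U. \<bar>x\<bar> \<le> R"
    unfolding bounded_iff by auto
  then have R: "fst ` U \<subseteq> {-R..R}"
    by (auto simp: abs_le_iff)
  obtain K where K: "K-lipschitz_on {-R..R} g"
    using g_lip by blast
  obtain Lx where "Lx-lipschitz_on U fst"
    using x by blast
  then have gx: "?lip (\<lambda>y. g (fst y))"
    using lipschitz_on_compose2[OF _ lipschitz_on_subset[OF K R]] by blast
  obtain L1 L2 L3
    where "L1-lipschitz_on U (\<lambda>y. fst (snd y))"
      and "L2-lipschitz_on U (\<lambda>y. snd (snd y) * fst y / 2 - g (fst y) * (fst y)\<^sup>2 * fst (snd y))"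
      and "L3-lipschitz_on U (\<lambda>y. -4 * g (fst y) * (fst (snd y))\<^sup>2)"
    using p diff[OF divide[OF mult[OF e x]] mult[OF mult[OF gx square[OF x]] p]]
      mult[OF mult[OF const gx] square[OF p]]
    by blast
  then have "(sqrt (L1\<^sup>2 + (sqrt (L2\<^sup>2 + L3\<^sup>2))\<^sup>2))-lipschitz_on U (damped_field g)"
    unfolding damped_field_eq by (intro lipschitz_on_Pair)
  then show ?thesis
    by (rule that)
qed

lemma ode_sol_of_field_solution:
  assumes "B < 0"
    and Z: "\<And>s. s \<in> lint B \<Longrightarrow> (Z has_vector_derivative damped_field (dsq \<delta>) (Z s)) (at s within lint B)"
  shows "ode_sol \<delta> B (\<lambda>s. fst (Z s)) (\<lambda>s. fst (snd (Z s))) (\<lambda>s. snd (snd (Z s)))"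
  unfolding ode_sol_def
proof (intro conjI assms exI[of _ "\<lambda>s. fst (snd (damped_field (dsq \<delta>) (Z s)))"] ballI)
  fix s assume "s \<in> lint B"
  obtain x p e where Zs: "Z s = (x, p, e)"
    by (cases "Z s") auto
  note derivs = components_has_real_derivative[OF Z[OF \<open>s \<in> lint B\<close>, unfolded Zs damped_field_simp]]
  show "((\<lambda>s. fst (Z s)) has_real_derivative fst (snd (Z s))) (at s within lint B)"
    "((\<lambda>s. fst (snd (Z s))) has_real_derivative fst (snd (damped_field (dsq \<delta>) (Z s)))) (at s within lint B)"
    "((\<lambda>s. snd (snd (Z s))) has_real_derivative
        -4 * dsq \<delta> (fst (Z s)) * (fst (snd (Z s)))\<^sup>2) (at s within lint B)"
    "fst (snd (damped_field (dsq \<delta>) (Z s))) + dsq \<delta> (fst (Z s)) * (fst (Z s))\<^sup>2 * fst (snd (Z s))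
      = snd (snd (Z s)) * fst (Z s) / 2"
    using derivs by (simp_all add: Zs)
qed

locale damped_solution = damping +
  fixes A :: ereal and u u' E :: "real \<Rightarrow> real"
  assumes sol: "ode_sol \<delta> A u u' E"
    and on_manifold: "\<forall>s\<in>lint A. 2 * (u' s)\<^sup>2 - E s * (u s)\<^sup>2 = 1"
begin

lemma A_neg: "A < 0"
  using sol by (simp add: ode_sol_def)

lemma zero_in_lint: "0 \<in> lint A"
  using A_neg by (simp add: lint_def zero_ereal_def)

lemma lint_le_0: "s \<in> lint A \<Longrightarrow> s \<le> 0"
  by (simp add: lint_def)

lemma u'_sq_eq: "s \<in> lint A \<Longrightarrow> 2 * (u' s)\<^sup>2 = 1 + E s * (u s)\<^sup>2"
  using on_manifold by auto

lemma solution_derivatives: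
  assumes "s \<in> lint A"
  shows u_deriv: "(u has_real_derivative u' s) (at s within lint A)"
    and u'_deriv: "(u' has_real_derivative E s * u s / 2 - dsq \<delta> (u s) * (u s)\<^sup>2 * u' s)
      (at s within lint A)"
    and E_deriv: "(E has_real_derivative -4 * dsq \<delta> (u s) * (u' s)\<^sup>2) (at s within lint A)"
proof -
  obtain u'' where "\<forall>s\<in>lint A. (u has_real_derivative u' s) (at s within lint A) \<and>
      (u' has_real_derivative u'' s) (at s within lint A) \<and>
      (E has_real_derivative -4 * dsq \<delta> (u s) * (u' s)\<^sup>2) (at s within lint A) \<and>
      u'' s + dsq \<delta> (u s) * (u s)\<^sup>2 * u' s = E s * u s / 2"
    using sol by (auto simp: ode_sol_def)
  note at_s = this[rule_format, OF assms]
  then have "u'' s = E s * u s / 2 - dsq \<delta> (u s) * (u s)\<^sup>2 * u' s"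
    by (simp add: eq_diff_eq)
  with at_s show "(u has_real_derivative u' s) (at s within lint A)"
    "(u' has_real_derivative E s * u s / 2 - dsq \<delta> (u s) * (u s)\<^sup>2 * u' s) (at s within lint A)"
    "(E has_real_derivative -4 * dsq \<delta> (u s) * (u' s)\<^sup>2) (at s within lint A)"
    by auto
qed

lemma continuous_on_u: "continuous_on (lint A) u"
  using DERIV_continuous[OF u_deriv] by (simp add: continuous_on_eq_continuous_within)

lemma E_antimono:
  assumes "s \<in> lint A" "s \<le> t" "t \<le> 0"
  shows "E t \<le> E s"
proof -
  have "- E s \<le> - E t"
  proof (rule has_real_derivative_nonneg_imp_le[OF \<open>s \<le> t\<close> atLeastAtMost_subset_lint[OF assms(1,3)]])
    fix x assume "x \<in> lint A"
    then show "((\<lambda>x. - E x) has_real_derivative 4 * dsq \<delta> (u x) * (u' x)\<^sup>2) (at x within lint A)"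
      using DERIV_minus[OF E_deriv] by simp
    show "0 \<le> 4 * dsq \<delta> (u x) * (u' x)\<^sup>2"
      by (simp add: dsq_nonneg)
  qed
  then show ?thesis
    by simp
qed

lemma E_ge_E0: "s \<in> lint A \<Longrightarrow> E 0 \<le> E s"
  using E_antimono lint_le_0 by blast

definition state :: "real \<Rightarrow> real \<times> real \<times> real" where
  "state s = (u s, u' s, E s)"

lemma state_has_vector_derivative:
  "s \<in> lint A \<Longrightarrow> (state has_vector_derivative damped_field (dsq \<delta>) (state s)) (at s within lint A)"
  unfolding state_def[abs_def] damped_field_simp
  by (rule triple_has_vector_derivative[OF solution_derivatives])

definition tail :: "real \<Rightarrow> real" where
  "tail s = integral {s..0} (\<lambda>t. (u t)\<^sup>2)"

lemma tail_has_real_derivative: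
  assumes "s \<in> lint A"
  shows "(tail has_real_derivative - (u s)\<^sup>2) (at s within lint A)"
proof -
  obtain b where b: "A < ereal b" "b < s"
    using assms ereal_dense2 by (force simp: lint_def)
  then have "b \<in> lint A"
    using assms by (simp add: lint_def)
  have "continuous_on {b..0} (\<lambda>t. (u t)\<^sup>2)"
    using continuous_on_subset[OF continuous_on_u atLeastAtMost_subset_lint[OF \<open>b \<in> lint A\<close>]]
    by (intro continuous_intros) auto
  then have "(tail has_real_derivative - (u s)\<^sup>2) (at s within {b..0})"
    unfolding tail_def[abs_def] using b assms lint_le_0 by (intro integral_has_real_derivative') auto
  moreover have "at s within {b..0} = at s within lint A"
  proof (rule at_within_nhd[of _ "{b<..}"])
    have "A < ereal x" if "b < x" for x
      using b(1) that by (metis less_ereal.simps(1) less_trans)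
    then show "{b..0} \<inter> {b<..} - {s} = lint A \<inter> {b<..} - {s}"
      by (auto simp: lint_def)
  qed (use b in auto)
  ultimately show ?thesis
    by simp
qed

lemma tail_nonneg: "s \<in> lint A \<Longrightarrow> 0 \<le> tail s"
  unfolding tail_def
  by (intro Henstock_Kurzweil_Integration.integral_nonneg integrable_continuous_real
      continuous_intros continuous_on_subset[OF continuous_on_u] atLeastAtMost_subset_lint) auto

lemma tail_bounded:
  assumes "(\<integral>\<^sup>+ s\<in>lint A. ennreal ((u s)\<^sup>2) \<partial>lborel) < \<infinity>"
  obtains J where "\<And>s. s \<in> lint A \<Longrightarrow> tail s \<le> J"
proof -
  have "tail s \<le> enn2real (\<integral>\<^sup>+ t\<in>lint A. ennreal ((u t)\<^sup>2) \<partial>lborel)" if s: "s \<in> lint A" for s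
  proof -
    have "ennreal (tail s) \<le> (\<integral>\<^sup>+ t\<in>lint A. ennreal ((u t)\<^sup>2) \<partial>lborel)"
      unfolding tail_def using atLeastAtMost_subset_lint[OF s order_refl]
      by (intro integral_le_nn_integral continuous_intros continuous_on_subset[OF continuous_on_u]) auto
    with assms have "enn2real (ennreal (tail s)) \<le> enn2real (\<integral>\<^sup>+ t\<in>lint A. ennreal ((u t)\<^sup>2) \<partial>lborel)"
      by (intro enn2real_mono) auto
    then show ?thesis
      by (cases "0 \<le> tail s") (auto intro: order_trans[OF _ enn2real_nonneg])
  qed
  then show ?thesis
    by (rule that)
qed

subsection \<open>Solutions defined on a half-line\<close>

text \<open>With \<open>G' x = dsq \<delta> x * x ^ 3\<close>, the damping term drops out of the derivative of
  \<open>u u' + G u\<close>, and the manifold relation turns \<open>(u')\<^sup>2\<close> into \<open>1/2 + E u\<^sup>2 / 2\<close>.\<close>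
lemma virial_has_real_derivative:
  assumes G: "\<And>x. (G has_real_derivative dsq \<delta> x * x ^ 3) (at x)" and s: "s \<in> lint A"
  shows "((\<lambda>s. u s * u' s + G (u s)) has_real_derivative 1/2 + E s * (u s)\<^sup>2) (at s within lint A)"
proof -
  have "((\<lambda>s. u s * u' s + G (u s)) has_real_derivative
      u' s * u' s + (E s * u s / 2 - dsq \<delta> (u s) * (u s)\<^sup>2 * u' s) * u s + dsq \<delta> (u s) * (u s) ^ 3 * u' s)
      (at s within lint A)"
    by (intro DERIV_add DERIV_mult DERIV_chain2[OF G] solution_derivatives s)
  moreover have "u' s * u' s + (E s * u s / 2 - dsq \<delta> (u s) * (u s)\<^sup>2 * u' s) * u s
      + dsq \<delta> (u s) * (u s) ^ 3 * u' s = 1/2 + E s * (u s)\<^sup>2"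
    using u'_sq_eq[OF s] by (simp add: algebra_simps power2_eq_square power3_eq_cube)
  ultimately show ?thesis
    by simp
qed

lemma virial_bound:
  assumes G_nonneg: "\<And>x. 0 \<le> G x" and G: "\<And>x. (G has_real_derivative dsq \<delta> x * x ^ 3) (at x)"
    and s: "s \<in> lint A"
  shows "u s * u' s \<le> u 0 * u' 0 + G (u 0) + s / 2 + \<bar>E 0\<bar> * tail s"
proof -
  define \<Phi> where "\<Phi> s = u s * u' s + G (u s)" for s
  have "\<Phi> s - s / 2 - \<bar>E 0\<bar> * tail s \<le> \<Phi> 0 - 0 / 2 - \<bar>E 0\<bar> * tail 0"
  proof (rule has_real_derivative_nonneg_imp_le[OF lint_le_0[OF s] atLeastAtMost_subset_lint[OF s order_refl]])
    fix x assume x: "x \<in> lint A"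
    show "((\<lambda>s. \<Phi> s - s / 2 - \<bar>E 0\<bar> * tail s) has_real_derivative
        (1/2 + E x * (u x)\<^sup>2) - 1 / 2 - \<bar>E 0\<bar> * - (u x)\<^sup>2) (at x within lint A)"
      using virial_has_real_derivative[OF G x] tail_has_real_derivative[OF x]
      unfolding \<Phi>_def[abs_def] by (intro DERIV_diff DERIV_cmult DERIV_cdivide DERIV_ident)
    have "0 \<le> (E x + \<bar>E 0\<bar>) * (u x)\<^sup>2"
      using E_ge_E0[OF x] by simp
    then show "0 \<le> (1/2 + E x * (u x)\<^sup>2) - 1 / 2 - \<bar>E 0\<bar> * - (u x)\<^sup>2"
      by (simp add: algebra_simps)
  qed
  moreover have "tail 0 = 0"
    by (simp add: tail_def)
  ultimately show ?thesis
    using G_nonneg[of "u s"] by (simp add: \<Phi>_def)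
qed

lemma eventually_u_mul_u'_le:
  assumes "A = - \<infinity>" and J: "\<And>s. s \<in> lint A \<Longrightarrow> tail s \<le> J"
  obtains s1 where "s1 \<le> 0" "\<And>s. s \<le> s1 \<Longrightarrow> u s * u' s \<le> -1"
proof -
  obtain G where G: "\<And>x. 0 \<le> G x" "\<And>x. (G has_real_derivative dsq \<delta> x * x ^ 3) (at x)"
    using damping_potential by blast
  define K where "K = \<bar>u 0 * u' 0 + G (u 0)\<bar> + \<bar>E 0\<bar> * \<bar>J\<bar> + 1"
  have "0 \<le> K"
    by (simp add: K_def)
  have "u s * u' s \<le> K - 1 + s / 2" if "s \<le> 0" for s
  proof -
    have "\<bar>E 0\<bar> * tail s \<le> \<bar>E 0\<bar> * \<bar>J\<bar>"
      using J[of s] that \<open>A = - \<infinity>\<close> by (intro mult_left_mono) auto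
    moreover have "u s * u' s \<le> u 0 * u' 0 + G (u 0) + s / 2 + \<bar>E 0\<bar> * tail s"
      using virial_bound[OF G, of s] that \<open>A = - \<infinity>\<close> by simp
    ultimately show ?thesis
      using abs_ge_self[of "u 0 * u' 0 + G (u 0)"] unfolding K_def by linarith
  qed
  note bound = this
  show ?thesis
  proof (rule that[of "- 2 * K"])
    fix s assume "s \<le> - 2 * K"
    with bound[of s] \<open>0 \<le> K\<close> show "u s * u' s \<le> -1"
      by linarith
  qed (use \<open>0 \<le> K\<close> in linarith)
qed

lemma u_sq_grows:
  assumes "A = - \<infinity>" "s1 \<le> 0" and uu': "\<And>s. s \<le> s1 \<Longrightarrow> u s * u' s \<le> -1" and "x \<le> s1"
  shows "2 * (s1 - x) \<le> (u x)\<^sup>2"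
proof -
  have "- ((u x)\<^sup>2 + 2 * x) \<le> - ((u s1)\<^sup>2 + 2 * s1)"
  proof (rule has_real_derivative_nonneg_imp_le[where S = "{..s1}" and F = "\<lambda>x. - ((u x)\<^sup>2 + 2 * x)"])
    fix y :: real assume y: "y \<in> {..s1}"
    then have "y \<in> lint A"
      using assms by auto
    then have "((\<lambda>x. (u x)\<^sup>2) has_real_derivative 2 * u y * u' y) (at y within lint A)"
      using DERIV_power[OF u_deriv, of y 2] by (simp add: ac_simps)
    then have "((\<lambda>x. - ((u x)\<^sup>2 + 2 * x)) has_real_derivative - (2 * u y * u' y + 2 * 1))
        (at y within lint A)"
      by (intro DERIV_minus DERIV_add DERIV_cmult DERIV_ident)
    then show "((\<lambda>x. - ((u x)\<^sup>2 + 2 * x)) has_real_derivative - (2 * u y * u' y + 2 * 1))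
        (at y within {..s1})"
      by (rule DERIV_subset) (use assms in auto)
    show "0 \<le> - (2 * u y * u' y + 2 * 1)"
      using uu'[of y] y by simp
  qed (use assms in auto)
  then show ?thesis
    unfolding right_diff_distrib using zero_le_power2[of "u s1"] by linarith
qed

lemma tail_unbounded:
  assumes "A = - \<infinity>" "s1 \<le> 0" and uu': "\<And>s. s \<le> s1 \<Longrightarrow> u s * u' s \<le> -1" and "t \<le> s1 - 1"
  shows "s1 - 1 - t \<le> tail t"
proof -
  have u_sq: "1 \<le> (u x)\<^sup>2" if "x \<le> s1 - 1" for x
    using u_sq_grows[OF assms(1,2) uu', of x] that unfolding right_diff_distrib by linarith
  have "- (tail t + t) \<le> - (tail (s1 - 1) + (s1 - 1))"
  proof (rule has_real_derivative_nonneg_imp_le[where S = "{..s1 - 1}" and F = "\<lambda>x. - (tail x + x)"])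
    fix y :: real assume y: "y \<in> {..s1 - 1}"
    then have "y \<in> lint A"
      using assms by auto
    then have "((\<lambda>x. - (tail x + x)) has_real_derivative - (- (u y)\<^sup>2 + 1)) (at y within lint A)"
      by (intro DERIV_minus DERIV_add tail_has_real_derivative DERIV_ident)
    then show "((\<lambda>x. - (tail x + x)) has_real_derivative - (- (u y)\<^sup>2 + 1)) (at y within {..s1 - 1})"
      by (rule DERIV_subset) (use assms in auto)
    show "0 \<le> - (- (u y)\<^sup>2 + 1)"
      using u_sq y by simp
  qed (use assms in auto)
  moreover have "0 \<le> tail (s1 - 1)"
    using assms by (intro tail_nonneg) auto
  ultimately show ?thesis
    by linarith
qed

lemma nn_integral_infinite_if_global:
  assumes "A = - \<infinity>"
  shows "(\<integral>\<^sup>+ s\<in>lint A. ennreal ((u s)\<^sup>2) \<partial>lborel) = \<infinity>"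
proof (rule ccontr)
  assume "(\<integral>\<^sup>+ s\<in>lint A. ennreal ((u s)\<^sup>2) \<partial>lborel) \<noteq> \<infinity>"
  then obtain J where J: "\<And>s. s \<in> lint A \<Longrightarrow> tail s \<le> J"
    using tail_bounded by (auto simp: less_top)
  obtain s1 where "s1 \<le> 0" and uu': "\<And>s. s \<le> s1 \<Longrightarrow> u s * u' s \<le> -1"
    using eventually_u_mul_u'_le[OF assms J] by blast
  define t where "t = s1 - 1 - (\<bar>J\<bar> + 1)"
  have "t \<le> s1 - 1"
    unfolding t_def using abs_ge_zero[of J] by linarith
  then have "s1 - 1 - t \<le> tail t"
    using tail_unbounded[OF assms \<open>s1 \<le> 0\<close> uu'] by blast
  moreover have "tail t \<le> J"
    using J \<open>s1 \<le> 0\<close> assms by (simp add: t_def)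
  ultimately show False
    unfolding t_def by linarith
qed

subsection \<open>Solutions starting at a finite time\<close>

lemma E_deriv_lower_bound:
  assumes M: "\<And>x. dsq \<delta> x \<le> M" and s: "s \<in> lint A" and "1 \<le> E s + c" "0 \<le> c"
  shows "4 * dsq \<delta> (u s) * (u' s)\<^sup>2 \<le> 2 * M * (1 + (u s)\<^sup>2) * (E s + c)"
proof -
  have "0 \<le> M"
    using M[of 0] dsq_nonneg[of 0] by linarith
  have "E s * (u s)\<^sup>2 \<le> (E s + c) * (u s)\<^sup>2"
    using \<open>0 \<le> c\<close> by (intro mult_right_mono) auto
  then have "2 * (u' s)\<^sup>2 \<le> (E s + c) * (1 + (u s)\<^sup>2)"
    using u'_sq_eq[OF s] \<open>1 \<le> E s + c\<close> by (simp add: algebra_simps)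
  then have "dsq \<delta> (u s) * (2 * (u' s)\<^sup>2) \<le> M * ((E s + c) * (1 + (u s)\<^sup>2))"
    by (rule mult_mono[OF M[of "u s"] _ \<open>0 \<le> M\<close>]) simp
  then show ?thesis
    by (simp add: algebra_simps)
qed

lemma u_mul_u'_lower_bound:
  assumes s: "s \<in> lint A" and "E s \<le> C"
  shows "- (1 + \<bar>C\<bar>) * (1 + (u s)\<^sup>2) \<le> 2 * u s * u' s"
proof -
  have "E s * (u s)\<^sup>2 \<le> \<bar>C\<bar> * (u s)\<^sup>2"
    using \<open>E s \<le> C\<close> by (intro mult_right_mono) auto
  then have "(u' s)\<^sup>2 \<le> 1 + \<bar>C\<bar> * (u s)\<^sup>2"
    using u'_sq_eq[OF s] zero_le_power2[of "u' s"] by linarith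
  moreover have "- (2 * u s * u' s) \<le> (u s)\<^sup>2 + (u' s)\<^sup>2"
    using zero_le_power2[of "u s + u' s"] by (simp add: power2_sum)
  moreover have "0 \<le> \<bar>C\<bar> * (u s)\<^sup>2"
    by simp
  ultimately show ?thesis
    by (simp add: algebra_simps)
qed

text \<open>Gronwall's inequality for \<open>E + c\<close> at the rate \<open>2 M (1 + u\<^sup>2)\<close>, whose integral over
  \<open>[s, 0]\<close> is \<open>2 M (tail s - s) \<le> 2 M (J - a)\<close>.\<close>
lemma E_bounded_above:
  assumes "A = ereal a" and J: "\<And>s. s \<in> lint A \<Longrightarrow> tail s \<le> J"
  obtains C where "\<And>s. s \<in> lint A \<Longrightarrow> E s \<le> C"
proof -
  obtain M where M: "\<And>x. dsq \<delta> x \<le> M"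
    using dsq_bounded by blast
  have "0 \<le> M"
    using M[of 0] dsq_nonneg[of 0] by linarith
  define c where "c = \<bar>E 0\<bar> + 1"
  have pos: "1 \<le> E s + c" if "s \<in> lint A" for s
    using E_ge_E0[OF that] abs_ge_minus_self[of "E 0"] by (simp add: c_def)
  have "E s + c \<le> (E 0 + c) * exp (2 * M * (J - a))" if s: "s \<in> lint A" for s
  proof -
    have "E s + c \<le> (E 0 + c) * exp (2 * M * (0 - tail 0) - 2 * M * (s - tail s))"
    proof (rule gronwall_le_exp[OF lint_le_0[OF s] atLeastAtMost_subset_lint[OF s order_refl]])
      fix x assume x: "x \<in> lint A"
      show "((\<lambda>s. E s + c) has_real_derivative -4 * dsq \<delta> (u x) * (u' x)\<^sup>2 + 0) (at x within lint A)"
        by (intro DERIV_add E_deriv[OF x] DERIV_const)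
      show "((\<lambda>s. 2 * M * (s - tail s)) has_real_derivative 2 * M * (1 - - (u x)\<^sup>2)) (at x within lint A)"
        by (intro DERIV_cmult DERIV_diff DERIV_ident tail_has_real_derivative[OF x])
      show "0 < E x + c"
        using pos[OF x] by simp
      show "- (2 * M * (1 - - (u x)\<^sup>2)) * (E x + c) \<le> -4 * dsq \<delta> (u x) * (u' x)\<^sup>2 + 0"
        using E_deriv_lower_bound[OF M x pos[OF x]] by (simp add: c_def)
    qed
    also have "\<dots> \<le> (E 0 + c) * exp (2 * M * (J - a))"
    proof (intro mult_left_mono)
      have "2 * M * (tail s - s) \<le> 2 * M * (J - a)"
        using J[OF s] s \<open>0 \<le> M\<close> assms(1) by (intro mult_left_mono) auto
      then show "exp (2 * M * (0 - tail 0) - 2 * M * (s - tail s)) \<le> exp (2 * M * (J - a))"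
        by (simp add: tail_def algebra_simps)
      show "0 \<le> E 0 + c"
        using pos[OF zero_in_lint] by simp
    qed
    finally show ?thesis .
  qed
  then show ?thesis
    by (intro that[of "(E 0 + c) * exp (2 * M * (J - a)) - c"]) (simp add: algebra_simps)
qed

lemma u_sq_bounded:
  assumes "A = ereal a" and C: "\<And>s. s \<in> lint A \<Longrightarrow> E s \<le> C"
  obtains Q where "\<And>s. s \<in> lint A \<Longrightarrow> (u s)\<^sup>2 \<le> Q"
proof -
  define k where "k = 1 + \<bar>C\<bar>"
  have "1 + (u s)\<^sup>2 \<le> (1 + (u 0)\<^sup>2) * exp (- k * a)" if s: "s \<in> lint A" for s
  proof -
    have "1 + (u s)\<^sup>2 \<le> (1 + (u 0)\<^sup>2) * exp (k * 0 - k * s)"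
    proof (rule gronwall_le_exp[OF lint_le_0[OF s] atLeastAtMost_subset_lint[OF s order_refl]])
      fix x assume x: "x \<in> lint A"
      show "((\<lambda>s. 1 + (u s)\<^sup>2) has_real_derivative 0 + 2 * u x * u' x) (at x within lint A)"
        using DERIV_power[OF u_deriv[OF x], of 2] by (intro DERIV_add DERIV_const) (simp add: ac_simps)
      show "((\<lambda>s. k * s) has_real_derivative k * 1) (at x within lint A)"
        by (intro DERIV_cmult DERIV_ident)
      show "0 < 1 + (u x)\<^sup>2"
        by (simp add: add_pos_nonneg)
      show "- (k * 1) * (1 + (u x)\<^sup>2) \<le> 0 + 2 * u x * u' x"
        using u_mul_u'_lower_bound[OF x C[OF x]] by (simp add: k_def)
    qed
    also have "\<dots> \<le> (1 + (u 0)\<^sup>2) * exp (- k * a)"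
    proof (intro mult_left_mono)
      have "k * a \<le> k * s"
        using s assms by (intro mult_left_mono) (auto simp: k_def)
      then show "exp (k * 0 - k * s) \<le> exp (- k * a)"
        by simp
    qed simp
    finally show ?thesis .
  qed
  then show ?thesis
    by (intro that[of "(1 + (u 0)\<^sup>2) * exp (- k * a)"]) (smt (verit))
qed

lemma state_bounded:
  assumes "A = ereal a" and J: "\<And>s. s \<in> lint A \<Longrightarrow> tail s \<le> J"
  obtains R where "\<And>s. s \<in> lint A \<Longrightarrow> norm (state s) \<le> R"
proof -
  obtain C where C: "\<And>s. s \<in> lint A \<Longrightarrow> E s \<le> C"
    using E_bounded_above[OF assms] by blast
  obtain Q where Q: "\<And>s. s \<in> lint A \<Longrightarrow> (u s)\<^sup>2 \<le> Q"
    using u_sq_bounded[OF \<open>A = ereal a\<close> C] by blast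
  have "norm (state s) \<le> (1 + Q) + (2 + \<bar>C\<bar> * Q) + (\<bar>C\<bar> + \<bar>E 0\<bar>)" if s: "s \<in> lint A" for s
  proof -
    have "norm (state s) \<le> \<bar>u s\<bar> + \<bar>u' s\<bar> + \<bar>E s\<bar>"
      using norm_Pair_le[of "u s" "(u' s, E s)"] norm_Pair_le[of "u' s" "E s"]
      by (simp add: state_def)
    moreover have "\<bar>u s\<bar> \<le> 1 + Q"
      using abs_le_one_plus_square[of "u s"] Q[OF s] by linarith
    moreover have "\<bar>u' s\<bar> \<le> 2 + \<bar>C\<bar> * Q"
    proof -
      have "E s * (u s)\<^sup>2 \<le> \<bar>C\<bar> * Q"
        using C[OF s] Q[OF s] by (intro mult_mono) auto
      then show ?thesis
        using abs_le_one_plus_square[of "u' s"] u'_sq_eq[OF s] zero_le_power2[of "u' s"] by linarith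
    qed
    moreover have "\<bar>E s\<bar> \<le> \<bar>C\<bar> + \<bar>E 0\<bar>"
      using C[OF s] E_ge_E0[OF s] by linarith
    ultimately show ?thesis
      by linarith
  qed
  then show ?thesis
    by (rule that)
qed

lemma state_tendsto_at_left_end:
  assumes "A = ereal a" and J: "\<And>s. s \<in> lint A \<Longrightarrow> tail s \<le> J"
  obtains y where "(state \<longlongrightarrow> y) (at_right a)"
proof -
  obtain R where R: "\<And>s. s \<in> lint A \<Longrightarrow> norm (state s) \<le> R"
    using state_bounded[OF assms] by blast
  have "bounded (damped_field (dsq \<delta>) ` cball 0 R)"
    by (intro compact_imp_bounded compact_continuous_image continuous_on_damped_field continuous_on_dsq)
      simp
  then obtain B where B: "\<And>z. z \<in> cball 0 R \<Longrightarrow> norm (damped_field (dsq \<delta>) z) \<le> B"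
    unfolding bounded_iff by blast
  have B_state: "norm (damped_field (dsq \<delta>) (state s)) \<le> B" if "s \<in> lint A" for s
    using B R[OF that] by simp
  have "0 \<le> B"
    using B_state[OF zero_in_lint] norm_ge_zero order_trans by blast
  have "B-lipschitz_on (lint A) state"
    using assms \<open>0 \<le> B\<close> state_has_vector_derivative B_state
    by (intro vector_derivative_bound_imp_lipschitz) auto
  then have "uniformly_continuous_on {a<..0} state"
    using assms by (simp add: lipschitz_on_uniformly_continuous)
  moreover have "a \<in> closure {a<..0}"
    using A_neg assms by (simp add: zero_ereal_def)
  ultimately obtain y where "(state \<longlongrightarrow> y) (at a within {a<..0})"
    by (rule uniformly_continuous_on_extension_at_closure)
  moreover have "at a within {a<..0} = at_right a"
    by (rule at_within_nhd[of _ "{..<0}"]) (use A_neg assms in \<open>auto simp: zero_ereal_def\<close>)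
  ultimately show ?thesis
    using that by simp
qed

lemma not_maximal_left_if_tail_bounded:
  assumes "A = ereal a" and J: "\<And>s. s \<in> lint A \<Longrightarrow> tail s \<le> J"
  shows "\<not> maximal_left \<delta> A u E"
proof -
  let ?f = "damped_field (dsq \<delta>)"
  have "a < 0"
    using A_neg assms by (simp add: zero_ereal_def)
  obtain y where y: "(state \<longlongrightarrow> y) (at_right a)"
    using state_tendsto_at_left_end[OF assms] by blast
  define Y where "Y = state(a := y)"
  have Y: "(Y has_vector_derivative ?f (Y t)) (at t within {a..0})" if "t \<in> {a..0}" for t
    unfolding Y_def
    using \<open>a < 0\<close> continuous_on_damped_field[OF continuous_on_dsq] state_has_vector_derivative assms y that
    by (intro has_vector_derivative_extend_left_endpoint) auto
  obtain L where "L-lipschitz_on (cball y 1) ?f"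
    using lipschitz_damped_field[OF compact_cball] dsq_lipschitz by metis
  then obtain h X where "0 < h" "X a = y"
    and X: "\<And>t. t \<in> {a - h..a} \<Longrightarrow> (X has_vector_derivative ?f (X t)) (at t within {a - h..a})"
    using picard_backward_local[OF zero_less_one] by metis
  define Z where "Z t = (if t \<le> a then X t else Y t)" for t
  have Z: "(Z has_vector_derivative ?f (Z t)) (at t within {a - h..0})" if "t \<in> {a - h..0}" for t
    using has_vector_derivative_join[OF _ \<open>a < 0\<close> X Y _ _ that] \<open>0 < h\<close> \<open>X a = y\<close>
    unfolding Z_def by (auto simp: Y_def if_distrib[of ?f])
  have "ode_sol \<delta> (ereal (a - h)) (\<lambda>s. fst (Z s)) (\<lambda>s. fst (snd (Z s))) (\<lambda>s. snd (snd (Z s)))"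
    using \<open>a < 0\<close> \<open>0 < h\<close>
    by (intro ode_sol_of_field_solution has_vector_derivative_within_subset[OF Z]) auto
  moreover have "ereal (a - h) < A"
    using \<open>0 < h\<close> assms by simp
  moreover have "\<forall>s\<in>lint A. fst (Z s) = u s \<and> snd (snd (Z s)) = E s"
    using assms by (simp add: Z_def Y_def state_def)
  ultimately show ?thesis
    unfolding maximal_left_def by blast
qed

end

theorem lemma9p3:
  fixes \<delta> \<delta>' :: "real \<Rightarrow> real" and A :: ereal and u u' E :: "real \<Rightarrow> real"
  assumes nonneg: "\<forall>r>0. \<delta> r \<ge> 0"
    and bdd: "bounded (\<delta> ` {0<..})"
    and deriv: "\<forall>r>0. (\<delta> has_real_derivative \<delta>' r) (at r)"
    and cont: "continuous_on {0<..} \<delta>'"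
    and lim0: "((\<lambda>r. sqrt r * \<delta>' r) \<longlongrightarrow> 0) (at_right 0)"
    and sol: "ode_sol \<delta> A u u' E"
    and onM: "\<forall>s\<in>lint A. 2 * (u' s)\<^sup>2 - E s * (u s)\<^sup>2 = 1"
    and maxl: "maximal_left \<delta> A u E"
  shows "(\<integral>\<^sup>+ s\<in>lint A. ennreal ((u s)\<^sup>2) \<partial>lborel) = \<infinity>"
proof -
  interpret damped_solution \<delta> \<delta>' A u u' E
    by unfold_locales (fact nonneg bdd deriv cont lim0 sol onM)+
  show ?thesis
  proof (cases A)
    case (real a)
    show ?thesis
    proof (rule ccontr)
      assume "(\<integral>\<^sup>+ s\<in>lint A. ennreal ((u s)\<^sup>2) \<partial>lborel) \<noteq> \<infinity>"
      then obtain J where "\<And>s. s \<in> lint A \<Longrightarrow> tail s \<le> J"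
        using tail_bounded by (auto simp: less_top)
      with maxl show False
        using not_maximal_left_if_tail_bounded[OF real] by blast
    qed
  next
    case PInf
    with A_neg show ?thesis
      by simp
  next
    case MInf
    then show ?thesis
      by (rule nn_integral_infinite_if_global)
  qed
qed

end
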